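(* Let $d\geq1$, $\lambda>0$, $\beta\geq 0$. Suppose $(T_0,Y_0)\in L^\infty_x(\mathbb{R}^d)\times L^\infty_x(\mathbb{R}^d)$ with $Y_0\geq 0$, and let $(T,Y)\in C^0_tL^\infty_x\times C^0_tL^\infty_x$ be a corresponding mild solution of the Cauchy problem below. Then for all $t$ at which the solution is defined, $$\|T(\cdot,t)\|_{L^\infty_x}\leq e^{-\lambda t}\|T_0\|_{L^\infty_x}+\lambda^{-1}\|Y_0\|_{L^\infty_x}.$$
   Context: The reaction rate is $r(T)=e^{-1/T}$ for $T>0$ and $r(T)=0$ for $T\leq 0$. The Cauchy problem is $T_t=(\Delta-\lambda)T+Yr(T)$, $Y_t=-\beta Y r(T)$, $T|_{t=0}=T_0$, $Y|_{t=0}=Y_0$ on $\mathbb{R}^d$. A pair $(T,Y)\in C^0_tL^\infty_x\times C^0_tL^\infty_x$ (continuous curves from the time interval into $L^\infty_x$) is a mild solution if for all $t$ in the time interval $$T(x,t)=e^{-\lambda t}e^{t\Delta}T_0+\int_0^t e^{-\lambda(t-\tau)}e^{(t-\tau)\Delta}\big(Y(\cdot,\tau)r(T(\cdot,\tau))\big)\,d\tau,\qquad Y(x,t)=Y_0(x)\exp\Big(-\beta\int_0^t r(T(x,\sigma))\,d\sigma\Big),$$ where $e^{t\Delta}$ is the heat semigroup on $\mathbb{R}^d$. *)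

theory Defs
  imports "HOL-Analysis.Analysis" "HOL-Probability.Essential_Supremum"
begin

text \<open>Space variable x ranges over an arbitrary Euclidean space 'a (so d = DIM('a) \<ge> 1);
  time is real. Functions of (x,t) are curried as T x t.\<close>

definition linf_norm :: "('a::euclidean_space \<Rightarrow> real) \<Rightarrow> ereal" where
  "linf_norm f = esssup lebesgue (\<lambda>x. ereal \<bar>f x\<bar>)"

definition in_Linf :: "('a::euclidean_space \<Rightarrow> real) \<Rightarrow> bool" where
  "in_Linf f \<longleftrightarrow> f \<in> borel_measurable lebesgue \<and> linf_norm f < \<infinity>"

definition C0_Linf :: "real set \<Rightarrow> ('a::euclidean_space \<Rightarrow> real \<Rightarrow> real) \<Rightarrow> bool" where
  "C0_Linf J T \<longleftrightarrow> (\<forall>t\<in>J. in_Linf (\<lambda>x. T x t)) \<and>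
     (\<forall>t\<in>J. ((\<lambda>s. linf_norm (\<lambda>x. T x s - T x t)) \<longlongrightarrow> 0) (at t within J))"

definition heat_kernel :: "real \<Rightarrow> 'a::euclidean_space \<Rightarrow> real" where
  "heat_kernel t z = (4 * pi * t) powr (- real DIM('a) / 2) * exp (- (norm z)\<^sup>2 / (4 * t))"

definition heat_sg :: "real \<Rightarrow> ('a::euclidean_space \<Rightarrow> real) \<Rightarrow> 'a \<Rightarrow> real" where
  "heat_sg t f x = (if t \<le> 0 then f x else (LINT y|lebesgue. heat_kernel t (x - y) * f y))"

definition rate :: "real \<Rightarrow> real" where
  "rate T = (if T > 0 then exp (- 1 / T) else 0)"

definition mild_solution ::
  "real \<Rightarrow> real \<Rightarrow> ('a::euclidean_space \<Rightarrow> real) \<Rightarrow> ('a \<Rightarrow> real) \<Rightarrow> real set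
    \<Rightarrow> ('a \<Rightarrow> real \<Rightarrow> real) \<Rightarrow> ('a \<Rightarrow> real \<Rightarrow> real) \<Rightarrow> bool" where
  "mild_solution lam \<beta> T0 Y0 J T Y \<longleftrightarrow>
     C0_Linf J T \<and> C0_Linf J Y \<and>
     (\<forall>t\<in>J. AE x in lebesgue.
        T x t = exp (- lam * t) * heat_sg t T0 x
          + (LBINT \<tau>=0..t. exp (- lam * (t - \<tau>)) * heat_sg (t - \<tau>) (\<lambda>y. Y y \<tau> * rate (T y \<tau>)) x)) \<and>
     (\<forall>t\<in>J. AE x in lebesgue.
        Y x t = Y0 x * exp (- \<beta> * (LBINT \<sigma>=0..t. rate (T x \<sigma>))))"

end

theory Submission
  imports Defs "HOL-Probability.Distributions"
begin

(* The heat kernel is a product of Gaussian densities, so e^{s Delta} averages against a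
   probability measure and cannot increase an L-infinity bound.  The fuel only decays,
   |Y| <= |Y0|, and the rate is at most 1, so the source Y r(T) in the Duhamel term is bounded
   by ||Y0||; the factor e^{-lam (t - tau)} integrates over [0, t] to at most 1/lam. *)

lemma norm_integral_le_nn_integral:
  fixes f :: "'a \<Rightarrow> 'b::{banach, second_countable_topology}"
  shows "ennreal (norm (integral\<^sup>L M f)) \<le> (\<integral>\<^sup>+x. norm (f x) \<partial>M)"
proof (cases "integrable M f")
  case True
  then show ?thesis by (rule integral_norm_bound_ennreal)
next
  case False
  then show ?thesis by (simp add: not_integrable_integral_eq)
qed

lemma abs_integral_kernel_mult_le:
  fixes k f :: "'a \<Rightarrow> real"
  assumes k_borel: "k \<in> borel_measurable M" and k_nonneg: "\<And>x. 0 \<le> k x"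
    and mass: "(\<integral>\<^sup>+x. ennreal (k x) \<partial>M) \<le> ennreal K" and "0 \<le> K"
    and f_bound: "AE x in M. k x \<noteq> 0 \<longrightarrow> \<bar>f x\<bar> \<le> C" and "0 \<le> C"
  shows "\<bar>LINT x|M. k x * f x\<bar> \<le> K * C"
proof -
  have "ennreal \<bar>LINT x|M. k x * f x\<bar> \<le> (\<integral>\<^sup>+x. ennreal \<bar>k x * f x\<bar> \<partial>M)"
    using norm_integral_le_nn_integral[of M "\<lambda>x. k x * f x"] by simp
  also have "\<dots> \<le> (\<integral>\<^sup>+x. ennreal (k x) * ennreal C \<partial>M)"
    using f_bound
  proof (intro nn_integral_mono_AE, eventually_elim)
    case (elim x)
    then have "\<bar>k x * f x\<bar> \<le> k x * C"
      using k_nonneg[of x] by (cases "k x = 0") (simp_all add: abs_mult)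
    then show ?case
      using k_nonneg[of x] by (simp add: ennreal_mult'[symmetric] \<open>0 \<le> C\<close>)
  qed
  also have "\<dots> = (\<integral>\<^sup>+x. ennreal (k x) \<partial>M) * ennreal C"
    using k_borel by (intro nn_integral_multc) measurable
  also have "\<dots> \<le> ennreal (K * C)"
    using mass \<open>0 \<le> K\<close> by (simp add: ennreal_mult' mult_right_mono)
  finally show ?thesis
    using \<open>0 \<le> K\<close> \<open>0 \<le> C\<close> by simp
qed

lemma heat_kernel_nonneg: "0 \<le> heat_kernel s z"
  unfolding heat_kernel_def by simp

lemma heat_kernel_borel [measurable]: "heat_kernel s \<in> borel_measurable borel"
  unfolding heat_kernel_def by measurable

lemma heat_kernel_eq_prod_normal_density:
  fixes x y :: "'a::euclidean_space"
  assumes "s > 0"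
  shows "heat_kernel s (x - y) = (\<Prod>b\<in>Basis. normal_density (x \<bullet> b) (sqrt (2 * s)) (y \<bullet> b))"
proof -
  have norm_sq: "(norm (x - y))\<^sup>2 = (\<Sum>b\<in>Basis. (y \<bullet> b - x \<bullet> b)\<^sup>2)"
    unfolding power2_norm_eq_inner
    by (subst euclidean_inner) (simp add: inner_diff_left power2_eq_square algebra_simps)
  have gauss: "exp (- (norm (x - y))\<^sup>2 / (4 * s))
      = (\<Prod>b\<in>Basis. exp (- (y \<bullet> b - x \<bullet> b)\<^sup>2 / (2 * (sqrt (2 * s))\<^sup>2)))"
    using \<open>s > 0\<close> by (simp add: norm_sq exp_sum[symmetric] sum_divide_distrib sum_negf)
  have "(4 * pi * s) powr (- real DIM('a) / 2) = inverse (((4 * pi * s) powr (1/2)) ^ DIM('a))"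
    using \<open>s > 0\<close> by (simp add: powr_minus powr_realpow[symmetric] powr_powr divide_simps)
  also have "\<dots> = (\<Prod>b\<in>(Basis::'a set). 1 / sqrt (2 * pi * (sqrt (2 * s))\<^sup>2))"
    using \<open>s > 0\<close> by (simp add: powr_half_sqrt power_one_over inverse_eq_divide mult.assoc)
  finally show ?thesis
    unfolding heat_kernel_def normal_density_def prod.distrib gauss by simp
qed

lemma nn_integral_heat_kernel:
  fixes x :: "'a::euclidean_space"
  assumes "s > 0"
  shows "(\<integral>\<^sup>+y. ennreal (heat_kernel s (x - y)) \<partial>lebesgue) = 1"
proof -
  have "(\<integral>\<^sup>+y. ennreal (heat_kernel s (x - y)) \<partial>lebesgue)
      = (\<integral>\<^sup>+y. (\<Prod>b\<in>Basis. ennreal (normal_density (x \<bullet> b) (sqrt (2 * s)) (y \<bullet> b))) \<partial>lborel)"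
    using \<open>s > 0\<close> by (simp add: nn_integral_completion heat_kernel_eq_prod_normal_density prod_ennreal)
  also have "\<dots> = (\<Prod>b\<in>(Basis::'a set). \<integral>\<^sup>+u. ennreal (normal_density (x \<bullet> b) (sqrt (2 * s)) u) \<partial>lborel)"
    by (rule nn_integral_lborel_prod) auto
  also have "\<dots> = 1"
    using \<open>s > 0\<close> by (simp add: nn_integral_eq_integral)
  finally show ?thesis .
qed

lemma abs_heat_sg_le:
  fixes f :: "'a::euclidean_space \<Rightarrow> real"
  assumes "s > 0" and "0 \<le> M" and "AE y in lebesgue. \<bar>f y\<bar> \<le> M"
  shows "\<bar>heat_sg s f x\<bar> \<le> M"
proof -
  have "(\<lambda>y. heat_kernel s (x - y)) \<in> borel_measurable lebesgue"
    by (intro measurable_completion) measurable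
  then have "\<bar>LINT y|lebesgue. heat_kernel s (x - y) * f y\<bar> \<le> 1 * M"
    using assms by (intro abs_integral_kernel_mult_le)
      (auto simp: heat_kernel_nonneg nn_integral_heat_kernel elim: eventually_mono)
  then show ?thesis
    using \<open>s > 0\<close> by (simp add: heat_sg_def)
qed

lemma AE_abs_heat_sg_le:
  fixes f :: "'a::euclidean_space \<Rightarrow> real"
  assumes "0 \<le> M" and "AE y in lebesgue. \<bar>f y\<bar> \<le> M"
  shows "AE x in lebesgue. \<bar>heat_sg s f x\<bar> \<le> M"
proof (cases "s > 0")
  case True
  then show ?thesis using abs_heat_sg_le assms by blast
next
  case False
  then show ?thesis using assms(2) by (simp add: heat_sg_def)
qed

lemma nn_integral_exp_decay_le:
  fixes lam t :: real
  assumes "lam > 0" and "0 \<le> t"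
  shows "(\<integral>\<^sup>+\<tau>. ennreal (exp (- lam * (t - \<tau>)) * indicator {0<..<t} \<tau>) \<partial>lborel) \<le> ennreal (1 / lam)"
proof -
  have "(\<integral>\<^sup>+\<tau>. ennreal (exp (- lam * (t - \<tau>)) * indicator {0<..<t} \<tau>) \<partial>lborel)
      \<le> (\<integral>\<^sup>+\<tau>. ennreal (exp (- lam * (t - \<tau>))) * indicator {0..t} \<tau> \<partial>lborel)"
    by (intro nn_integral_mono) (simp split: split_indicator)
  also have "\<dots> = ennreal (exp (- lam * (t - t)) / lam - exp (- lam * (t - 0)) / lam)"
    using assms by (intro nn_integral_FTC_Icc) (auto intro!: derivative_eq_intros)
  also have "\<dots> \<le> ennreal (1 / lam)"
    using assms by (intro ennreal_leI) simp
  finally show ?thesis .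
qed

lemma abs_interval_integral_exp_decay_mult_le:
  fixes g :: "real \<Rightarrow> real"
  assumes "lam > 0" and "0 \<le> t" and "0 \<le> N"
    and g_bound: "\<And>\<tau>. 0 < \<tau> \<Longrightarrow> \<tau> < t \<Longrightarrow> \<bar>g \<tau>\<bar> \<le> N"
  shows "\<bar>LBINT \<tau>=0..t. exp (- lam * (t - \<tau>)) * g \<tau>\<bar> \<le> N / lam"
proof -
  have "einterval 0 t = {0<..<t}"
    by (auto simp: einterval_def)
  then have "(LBINT \<tau>=0..t. exp (- lam * (t - \<tau>)) * g \<tau>)
      = (LINT \<tau>|lborel. (exp (- lam * (t - \<tau>)) * indicator {0<..<t} \<tau>) * g \<tau>)"
    using \<open>0 \<le> t\<close> unfolding interval_lebesgue_integral_def set_lebesgue_integral_def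
    by (simp add: mult_ac)
  also have "\<bar>\<dots>\<bar> \<le> 1 / lam * N"
    using assms nn_integral_exp_decay_le[OF \<open>lam > 0\<close> \<open>0 \<le> t\<close>]
    by (intro abs_integral_kernel_mult_le) (auto split: split_indicator)
  finally show ?thesis by simp
qed

lemma interval_integral_nonneg:
  fixes f :: "real \<Rightarrow> real"
  assumes "0 \<le> t" and "\<And>x. 0 \<le> f x"
  shows "0 \<le> (LBINT x=0..t. f x)"
  using assms unfolding interval_lebesgue_integral_def set_lebesgue_integral_def
  by (simp add: einterval_def)

lemma in_LinfE:
  fixes f :: "'a::euclidean_space \<Rightarrow> real"
  assumes "in_Linf f"
  obtains M where "0 \<le> M" and "linf_norm f = ereal M" and "AE x in lebesgue. \<bar>f x\<bar> \<le> M"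
proof -
  have "f \<in> borel_measurable lebesgue" and finite: "linf_norm f < \<infinity>"
    using assms by (auto simp: in_Linf_def)
  have "esssup lebesgue (\<lambda>x::'a. 0) \<le> linf_norm f"
    unfolding linf_norm_def by (intro esssup_mono) auto
  then have nonneg: "0 \<le> linf_norm f"
    by (simp add: esssup_const)
  have "AE x in lebesgue. ereal \<bar>f x\<bar> \<le> linf_norm f"
    unfolding linf_norm_def by (rule esssup_AE)
  with nonneg finite that show ?thesis
    by (cases "linf_norm f") auto
qed

lemma linf_norm_le:
  fixes f :: "'a::euclidean_space \<Rightarrow> real"
  assumes "f \<in> borel_measurable lebesgue" and "AE x in lebesgue. \<bar>f x\<bar> \<le> B"
  shows "linf_norm f \<le> ereal B"
  unfolding linf_norm_def using assms by (intro esssup_I) auto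

lemma rate_nonneg: "0 \<le> rate T"
  and rate_le_1: "rate T \<le> 1"
  unfolding rate_def by auto

lemma mild_solution_abs_reaction_le:
  assumes "mild_solution lam \<beta> T0 Y0 J T Y" and "0 \<le> \<beta>" and "J \<subseteq> {0..}" and "\<tau> \<in> J"
  shows "AE y in lebesgue. \<bar>Y y \<tau> * rate (T y \<tau>)\<bar> \<le> \<bar>Y0 y\<bar>"
proof -
  have "AE y in lebesgue. Y y \<tau> = Y0 y * exp (- \<beta> * (LBINT \<sigma>=0..\<tau>. rate (T y \<sigma>)))"
    using assms(1,4) unfolding mild_solution_def by blast
  then show ?thesis
  proof eventually_elim
    case (elim y)
    have "0 \<le> (LBINT \<sigma>=0..\<tau>. rate (T y \<sigma>))"
      using assms(3,4) by (intro interval_integral_nonneg) (auto simp: rate_nonneg)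
    then have "exp (- \<beta> * (LBINT \<sigma>=0..\<tau>. rate (T y \<sigma>))) \<le> 1"
      using \<open>0 \<le> \<beta>\<close> by simp
    then have "\<bar>Y y \<tau>\<bar> \<le> \<bar>Y0 y\<bar>"
      by (simp add: elim abs_mult mult_left_le)
    moreover have "\<bar>Y y \<tau> * rate (T y \<tau>)\<bar> \<le> \<bar>Y y \<tau>\<bar>"
      using rate_nonneg rate_le_1 by (simp add: abs_mult mult_left_le)
    ultimately show ?case by linarith
  qed
qed

lemma mild_solution_abs_duhamel_le:
  assumes sol: "mild_solution lam \<beta> T0 Y0 J T Y" and "lam > 0" and "0 \<le> \<beta>"
    and "is_interval J" and "0 \<in> J" and "J \<subseteq> {0..}" and "t \<in> J"
    and "0 \<le> N" and Y0_bound: "AE y in lebesgue. \<bar>Y0 y\<bar> \<le> N"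
  shows "\<bar>LBINT \<tau>=0..t. exp (- lam * (t - \<tau>)) * heat_sg (t - \<tau>) (\<lambda>y. Y y \<tau> * rate (T y \<tau>)) x\<bar>
    \<le> N / lam"
proof (rule abs_interval_integral_exp_decay_mult_le)
  fix \<tau> assume "0 < \<tau>" "\<tau> < t"
  then have "\<tau> \<in> J"
    using \<open>is_interval J\<close> \<open>0 \<in> J\<close> \<open>t \<in> J\<close> unfolding is_interval_1 by fastforce
  from mild_solution_abs_reaction_le[OF sol \<open>0 \<le> \<beta>\<close> \<open>J \<subseteq> {0..}\<close> this] Y0_bound
  have "AE y in lebesgue. \<bar>Y y \<tau> * rate (T y \<tau>)\<bar> \<le> N"
    by eventually_elim auto
  then show "\<bar>heat_sg (t - \<tau>) (\<lambda>y. Y y \<tau> * rate (T y \<tau>)) x\<bar> \<le> N"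
    using \<open>\<tau> < t\<close> \<open>0 \<le> N\<close> by (intro abs_heat_sg_le) auto
qed (use assms in auto)

theorem proposition2p5:
  fixes T0 Y0 :: "'a::euclidean_space \<Rightarrow> real"
    and T Y :: "'a \<Rightarrow> real \<Rightarrow> real"
    and J :: "real set" and lam \<beta> t :: real
  assumes "lam > 0" and "\<beta> \<ge> 0"
    and "in_Linf T0" and "in_Linf Y0"
    and "AE x in lebesgue. Y0 x \<ge> 0"
    and "is_interval J" and "0 \<in> J" and "J \<subseteq> {0..}"
    and "mild_solution lam \<beta> T0 Y0 J T Y"
    and "t \<in> J"
  shows "linf_norm (\<lambda>x. T x t)
           \<le> ereal (exp (- lam * t)) * linf_norm T0 + ereal (1 / lam) * linf_norm Y0"
proof -
  obtain M where "0 \<le> M" and M: "linf_norm T0 = ereal M" "AE x in lebesgue. \<bar>T0 x\<bar> \<le> M"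
    using \<open>in_Linf T0\<close> by (rule in_LinfE)
  obtain N where "0 \<le> N" and N: "linf_norm Y0 = ereal N" "AE x in lebesgue. \<bar>Y0 x\<bar> \<le> N"
    using \<open>in_Linf Y0\<close> by (rule in_LinfE)
  have "AE x in lebesgue. T x t = exp (- lam * t) * heat_sg t T0 x
      + (LBINT \<tau>=0..t. exp (- lam * (t - \<tau>)) * heat_sg (t - \<tau>) (\<lambda>y. Y y \<tau> * rate (T y \<tau>)) x)"
    using assms(9,10) unfolding mild_solution_def by blast
  moreover note AE_abs_heat_sg_le[OF \<open>0 \<le> M\<close> M(2), of t]
  ultimately have "AE x in lebesgue. \<bar>T x t\<bar> \<le> exp (- lam * t) * M + N / lam"
  proof eventually_elim
    case (elim x)
    have "\<bar>T x t\<bar> \<le> \<bar>exp (- lam * t) * heat_sg t T0 x\<bar>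
        + \<bar>LBINT \<tau>=0..t. exp (- lam * (t - \<tau>)) * heat_sg (t - \<tau>) (\<lambda>y. Y y \<tau> * rate (T y \<tau>)) x\<bar>"
      unfolding elim(1) by (rule abs_triangle_ineq)
    also have "\<dots> \<le> exp (- lam * t) * \<bar>heat_sg t T0 x\<bar> + N / lam"
      using mild_solution_abs_duhamel_le[OF assms(9,1,2,6-8,10) \<open>0 \<le> N\<close> N(2)]
      by (simp add: abs_mult)
    also have "\<dots> \<le> exp (- lam * t) * M + N / lam"
      using elim(2) by simp
    finally show ?case .
  qed
  moreover have "(\<lambda>x. T x t) \<in> borel_measurable lebesgue"
    using assms(9,10) unfolding mild_solution_def C0_Linf_def in_Linf_def by blast
  ultimately have "linf_norm (\<lambda>x. T x t) \<le> ereal (exp (- lam * t) * M + N / lam)"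
    by (intro linf_norm_le)
  then show ?thesis
    by (simp add: M(1) N(1))
qed

end
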